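(* Assume $T_B\colon\mathcal D(T_B)\to Y_B$ is bijective. Then for each $n\in\mathbb Z$, $X=X(n)\oplus Z(n)$.
   Context: $B$ is an admissible Banach sequence space: a complete normed space $B$ of real sequences $(s_n)_{n\in\mathbb Z}$ such that $\mathbf{s}'\in B$, $|s_n|\le|s'_n|$ for all $n$ imply $\mathbf{s}\in B$, $\|\mathbf{s}\|_B\le\|\mathbf{s}'\|_B$; $\chi_{\{n\}}\in B$ with $\|\chi_{\{n\}}\|_B>0$ for all $n$; and shifts $(s_{n+m})_n$ of elements of $B$ are in $B$ with norm at most $N\|\mathbf{s}\|_B$ for a fixed $N>0$. $X$ is a Banach space with norms $\|\cdot\|_n$ ($n\in\mathbb Z$) each equivalent to its norm; $(A_m)_{m\in\mathbb Z}$ are bounded linear operators on $X$. $Y_B$ is the Banach space of sequences $\mathbf{x}=(x_n)_{n\in\mathbb Z}$ in $X$ with $(\|x_n\|_n)_n\in B$, normed by $\|(\|x_n\|_n)_n\|_B$; $(T_B\mathbf{x})_n=x_n-A_{n-1}x_{n-1}$ on $\mathcal D(T_B)=\{\mathbf{x}\in Y_B:T_B\mathbf{x}\in Y_B\}$. For $n\in\mathbb Z$, $X(n)$ is the set of $x\in X$ for which there is $\mathbf{x}=(x_m)_m\in Y_B$ with $x_n=x$ and $x_m=A_{m-1}x_{m-1}$ for all $m>n$; $Z(n)$ is the set of $x\in X$ for which there is $\mathbf{z}=(z_m)_m\in Y_B$ with $z_n=x$ and $z_m=A_{m-1}z_{m-1}$ for all $m\le n$. *)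

theory Defs
  imports "HOL-Analysis.Analysis"
begin

definition admissible_space :: "(int \<Rightarrow> real) set \<Rightarrow> ((int \<Rightarrow> real) \<Rightarrow> real) \<Rightarrow> bool" where
  "admissible_space B nB \<longleftrightarrow>
     (\<forall>s\<in>B. \<forall>t\<in>B. (\<lambda>n. s n + t n) \<in> B) \<and>
     (\<forall>c. \<forall>s\<in>B. (\<lambda>n. c * s n) \<in> B) \<and>
     (\<forall>s\<in>B. nB s \<ge> 0) \<and>
     (\<forall>s\<in>B. nB s = 0 \<longleftrightarrow> s = (\<lambda>n. 0)) \<and>
     (\<forall>c. \<forall>s\<in>B. nB (\<lambda>n. c * s n) = \<bar>c\<bar> * nB s) \<and>
     (\<forall>s\<in>B. \<forall>t\<in>B. nB (\<lambda>n. s n + t n) \<le> nB s + nB t) \<and>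
     (\<forall>f :: nat \<Rightarrow> int \<Rightarrow> real. (\<forall>k. f k \<in> B) \<and>
        (\<forall>e>0. \<exists>N. \<forall>k\<ge>N. \<forall>l\<ge>N. nB (\<lambda>n. f k n - f l n) < e) \<longrightarrow>
        (\<exists>s\<in>B. (\<lambda>k. nB (\<lambda>n. f k n - s n)) \<longlonglongrightarrow> 0)) \<and>
     (\<forall>s s'. s' \<in> B \<and> (\<forall>n. \<bar>s n\<bar> \<le> \<bar>s' n\<bar>) \<longrightarrow> s \<in> B \<and> nB s \<le> nB s') \<and>
     (\<forall>n. (\<lambda>m. if m = n then 1 else 0) \<in> B \<and> nB (\<lambda>m. if m = n then 1 else 0) > 0) \<and>
     (\<exists>N>0. \<forall>s\<in>B. \<forall>m. (\<lambda>n. s (n + m)) \<in> B \<and> nB (\<lambda>n. s (n + m)) \<le> N * nB s)"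

definition equiv_norm_family :: "(int \<Rightarrow> 'a::real_normed_vector \<Rightarrow> real) \<Rightarrow> bool" where
  "equiv_norm_family nX \<longleftrightarrow> (\<forall>n.
     (\<forall>x. nX n x \<ge> 0) \<and> (\<forall>x. nX n x = 0 \<longleftrightarrow> x = 0) \<and>
     (\<forall>c x. nX n (c *\<^sub>R x) = \<bar>c\<bar> * nX n x) \<and>
     (\<forall>x y. nX n (x + y) \<le> nX n x + nX n y) \<and>
     (\<exists>c d. c > 0 \<and> d > 0 \<and> (\<forall>x. c * norm x \<le> nX n x \<and> nX n x \<le> d * norm x)))"

definition Y_B :: "(int \<Rightarrow> real) set \<Rightarrow> (int \<Rightarrow> 'a \<Rightarrow> real) \<Rightarrow> (int \<Rightarrow> 'a) set" where
  "Y_B B nX = {x. (\<lambda>n. nX n (x n)) \<in> B}"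

definition T_op :: "(int \<Rightarrow> 'a \<Rightarrow> 'a::real_vector) \<Rightarrow> (int \<Rightarrow> 'a) \<Rightarrow> (int \<Rightarrow> 'a)" where
  "T_op A x = (\<lambda>n. x n - A (n - 1) (x (n - 1)))"

definition dom_T :: "(int \<Rightarrow> real) set \<Rightarrow> (int \<Rightarrow> 'a \<Rightarrow> real) \<Rightarrow> (int \<Rightarrow> 'a \<Rightarrow> 'a::real_vector) \<Rightarrow> (int \<Rightarrow> 'a) set" where
  "dom_T B nX A = {x \<in> Y_B B nX. T_op A x \<in> Y_B B nX}"

definition Xn :: "(int \<Rightarrow> real) set \<Rightarrow> (int \<Rightarrow> 'a \<Rightarrow> real) \<Rightarrow> (int \<Rightarrow> 'a \<Rightarrow> 'a) \<Rightarrow> int \<Rightarrow> 'a set" where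
  "Xn B nX A n = {x. \<exists>xs \<in> Y_B B nX. xs n = x \<and> (\<forall>m>n. xs m = A (m - 1) (xs (m - 1)))}"

definition Zn :: "(int \<Rightarrow> real) set \<Rightarrow> (int \<Rightarrow> 'a \<Rightarrow> real) \<Rightarrow> (int \<Rightarrow> 'a \<Rightarrow> 'a) \<Rightarrow> int \<Rightarrow> 'a set" where
  "Zn B nX A n = {x. \<exists>zs \<in> Y_B B nX. zs n = x \<and> (\<forall>m\<le>n. zs m = A (m - 1) (zs (m - 1)))}"

end

theory Submission
  imports Defs
begin

text \<open>Given \<open>x\<close>, solve \<open>T w = \<delta>\<^sub>n x\<close>. Beyond \<open>n\<close> the solution \<open>w\<close> obeys the forward recursion,
  so \<open>w n \<in> X(n)\<close>; up to \<open>n\<close> the sequence \<open>\<delta>\<^sub>n x - w\<close> does, so \<open>x - w n \<in> Z(n)\<close>.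
  Conversely, an element of \<open>X(n) \<inter> Z(n)\<close> glues its two witnessing sequences into a
  solution of \<open>T w = 0\<close>, which vanishes by injectivity.\<close>

lemma admissible_space_add:
  assumes "admissible_space B nB" and "s \<in> B" and "t \<in> B"
  shows "(\<lambda>n. s n + t n) \<in> B"
  using assms unfolding admissible_space_def by blast

lemma admissible_space_dominated:
  assumes "admissible_space B nB" and "s' \<in> B" and "\<And>n. \<bar>s n\<bar> \<le> \<bar>s' n\<bar>"
  shows "s \<in> B"
proof -
  have "\<forall>s s'. s' \<in> B \<and> (\<forall>n. \<bar>s n\<bar> \<le> \<bar>s' n\<bar>) \<longrightarrow> s \<in> B \<and> nB s \<le> nB s'"
    using assms(1) unfolding admissible_space_def by blast
  with assms(2,3) show ?thesis by blast
qed

lemma admissible_space_scaled_indicator: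
  assumes "admissible_space B nB"
  shows "(\<lambda>m. c * (if m = n then 1 else 0)) \<in> B"
proof -
  have scale: "\<forall>c. \<forall>s\<in>B. (\<lambda>n. c * s n) \<in> B"
    and indicator: "\<forall>n. (\<lambda>m. if m = n then 1 else 0) \<in> B"
    using assms unfolding admissible_space_def by blast+
  show ?thesis
    using bspec[OF spec[OF scale, of c] spec[OF indicator, of n]] by simp
qed

lemma equiv_norm_family_zero:
  assumes "equiv_norm_family nX"
  shows "nX n 0 = 0"
  using assms unfolding equiv_norm_family_def by blast

lemma equiv_norm_family_nonneg:
  assumes "equiv_norm_family nX"
  shows "nX n x \<ge> 0"
  using assms unfolding equiv_norm_family_def by blast

lemma equiv_norm_family_diff_le:
  assumes "equiv_norm_family nX"
  shows "nX n (x - y) \<le> nX n x + nX n y"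
proof -
  have scale: "\<forall>c x. nX n (c *\<^sub>R x) = \<bar>c\<bar> * nX n x"
    and triangle: "\<forall>x y. nX n (x + y) \<le> nX n x + nX n y"
    using assms unfolding equiv_norm_family_def by blast+
  have "nX n (- y) = nX n y"
    using scale[rule_format, of "-1" y] by simp
  with triangle[rule_format, of x "- y"] show ?thesis by simp
qed

lemma Y_B_dominated:
  assumes "admissible_space B nB" and "equiv_norm_family nX"
    and "s \<in> Y_B B nX" and "t \<in> Y_B B nX"
    and "\<And>m. nX m (z m) \<le> nX m (s m) + nX m (t m)"
  shows "z \<in> Y_B B nX"
proof -
  have "(\<lambda>m. nX m (s m) + nX m (t m)) \<in> B"
    using admissible_space_add[OF assms(1)] assms(3,4) unfolding Y_B_def by blast
  moreover have "\<bar>nX m (z m)\<bar> \<le> \<bar>nX m (s m) + nX m (t m)\<bar>" for m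
    using assms(5)[of m] equiv_norm_family_nonneg[OF assms(2)] by simp
  ultimately show ?thesis
    unfolding Y_B_def mem_Collect_eq by (rule admissible_space_dominated[OF assms(1)])
qed

lemma single_in_Y_B:
  assumes "admissible_space B nB" and "equiv_norm_family nX"
  shows "(\<lambda>m. if m = n then x else 0) \<in> Y_B B nX"
proof -
  have "\<bar>nX m (if m = n then x else 0)\<bar> \<le> \<bar>nX n x * (if m = n then 1 else 0)\<bar>" for m
    by (simp add: equiv_norm_family_zero[OF assms(2)])
  then show ?thesis
    unfolding Y_B_def mem_Collect_eq
    by (rule admissible_space_dominated[OF assms(1) admissible_space_scaled_indicator[OF assms(1)]])
qed

lemma zero_in_Y_B:
  assumes "admissible_space B nB" and "equiv_norm_family nX"
  shows "(\<lambda>m. 0) \<in> Y_B B nX"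
  using single_in_Y_B[OF assms, of 0 0] by simp

lemma T_op_zero:
  assumes "\<And>m. linear (A m)"
  shows "T_op A (\<lambda>m. 0) = (\<lambda>m. 0)"
  by (simp add: T_op_def assms linear_0)

lemma zero_in_dom_T:
  assumes "admissible_space B nB" and "equiv_norm_family nX" and "\<And>m. linear (A m)"
  shows "(\<lambda>m. 0) \<in> dom_T B nX A"
  using zero_in_Y_B[OF assms(1,2)] T_op_zero[OF assms(3)] by (simp add: dom_T_def)

lemma zero_in_Xn_Zn:
  assumes "admissible_space B nB" and "equiv_norm_family nX" and "\<And>m. linear (A m)"
  shows "0 \<in> Xn B nX A n \<inter> Zn B nX A n"
  using zero_in_Y_B[OF assms(1,2)] assms(3) unfolding Xn_def Zn_def by (auto simp: linear_0)

lemma Xn_plus_Zn_if_surj: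
  assumes "admissible_space B nB" and "equiv_norm_family nX" and "\<And>m. linear (A m)"
    and surj: "T_op A ` dom_T B nX A = Y_B B nX"
  shows "\<exists>u\<in>Xn B nX A n. \<exists>v\<in>Zn B nX A n. x = u + v"
proof -
  define y where "y = (\<lambda>m. if m = n then x else 0)"
  have yY: "y \<in> Y_B B nX"
    unfolding y_def using single_in_Y_B[OF assms(1,2)] .
  then obtain w where "w \<in> dom_T B nX A" and "T_op A w = y"
    using surj by (metis imageE)
  then have wY: "w \<in> Y_B B nX" and Tw: "\<And>m. w m - A (m - 1) (w (m - 1)) = y m"
    unfolding dom_T_def T_op_def by (auto simp: fun_eq_iff)
  have "w m = A (m - 1) (w (m - 1))" if "m > n" for m
    using Tw[of m] that by (simp add: y_def)
  then have u: "w n \<in> Xn B nX A n"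
    unfolding Xn_def using wY by blast
  define z where "z = (\<lambda>m. if m \<le> n then y m - w m else 0)"
  have "z \<in> Y_B B nX"
  proof (rule Y_B_dominated[OF assms(1,2) yY wY])
    show "nX m (z m) \<le> nX m (y m) + nX m (w m)" for m
      using equiv_norm_family_diff_le[OF assms(2)] equiv_norm_family_nonneg[OF assms(2)]
      by (simp add: z_def equiv_norm_family_zero[OF assms(2)])
  qed
  moreover have "z m = A (m - 1) (z (m - 1))" if "m \<le> n" for m
  proof -
    have "z m = - A (m - 1) (w (m - 1))"
      using Tw[of m] that by (simp add: z_def algebra_simps)
    moreover have "z (m - 1) = - w (m - 1)"
      using that by (simp add: z_def y_def)
    ultimately show ?thesis by (simp add: assms(3) linear_neg)
  qed
  ultimately have v: "z n \<in> Zn B nX A n"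
    unfolding Zn_def by blast
  have "x = w n + z n" by (simp add: z_def y_def)
  with u v show ?thesis by blast
qed

lemma mem_Xn_Zn_eq_zero_if_inj:
  assumes "admissible_space B nB" and "equiv_norm_family nX" and "\<And>m. linear (A m)"
    and inj: "inj_on (T_op A) (dom_T B nX A)"
    and "x \<in> Xn B nX A n \<inter> Zn B nX A n"
  shows "x = 0"
proof -
  obtain xs zs where
      xs: "xs \<in> Y_B B nX" "xs n = x" "\<And>m. m > n \<Longrightarrow> xs m = A (m - 1) (xs (m - 1))"
    and zs: "zs \<in> Y_B B nX" "zs n = x" "\<And>m. m \<le> n \<Longrightarrow> zs m = A (m - 1) (zs (m - 1))"
    using assms(5) unfolding Xn_def Zn_def by blast
  define w where "w = (\<lambda>m. if m \<ge> n then xs m else zs m)"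
  have wY: "w \<in> Y_B B nX"
    by (rule Y_B_dominated[OF assms(1,2) xs(1) zs(1)])
      (simp add: w_def equiv_norm_family_nonneg[OF assms(2)])
  have Tw: "T_op A w = (\<lambda>m. 0)"
  proof
    fix m
    consider "m > n" | "m = n" | "m < n" by linarith
    then show "T_op A w m = 0"
    proof cases
      case 1
      then show ?thesis using xs(3)[of m] by (simp add: T_op_def w_def)
    next
      case 2
      then show ?thesis using xs(2) zs(2) zs(3)[of n] by (simp add: T_op_def w_def)
    next
      case 3
      then show ?thesis using zs(3)[of m] by (simp add: T_op_def w_def)
    qed
  qed
  have "w \<in> dom_T B nX A"
    using wY Tw zero_in_Y_B[OF assms(1,2)] by (simp add: dom_T_def)
  moreover have "T_op A w = T_op A (\<lambda>m. 0)"
    using Tw T_op_zero[OF assms(3)] by simp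
  ultimately have "w = (\<lambda>m. 0)"
    using inj_onD[OF inj _ _ zero_in_dom_T[OF assms(1-3)]] by blast
  then have "w n = 0" by simp
  then show ?thesis
    using xs(2) by (simp add: w_def)
qed

theorem lemma3p5:
  fixes B :: "(int \<Rightarrow> real) set" and nB :: "(int \<Rightarrow> real) \<Rightarrow> real"
    and nX :: "int \<Rightarrow> 'a::banach \<Rightarrow> real" and A :: "int \<Rightarrow> 'a \<Rightarrow> 'a"
  assumes "admissible_space B nB"
    and "equiv_norm_family nX"
    and "\<And>m. bounded_linear (A m)"
    and "bij_betw (T_op A) (dom_T B nX A) (Y_B B nX)"
  shows "\<forall>n. (\<forall>x. \<exists>u\<in>Xn B nX A n. \<exists>v\<in>Zn B nX A n. x = u + v)
           \<and> Xn B nX A n \<inter> Zn B nX A n = {0}"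
proof (intro allI conjI)
  have lin: "\<And>m. linear (A m)"
    using assms(3) bounded_linear.linear by blast
  have surj: "T_op A ` dom_T B nX A = Y_B B nX"
    and inj: "inj_on (T_op A) (dom_T B nX A)"
    using assms(4) by (simp_all add: bij_betw_def)
  fix n
  show "\<exists>u\<in>Xn B nX A n. \<exists>v\<in>Zn B nX A n. x = u + v" for x
    by (rule Xn_plus_Zn_if_surj[where A = A, OF assms(1,2) lin surj])
  show "Xn B nX A n \<inter> Zn B nX A n = {0}"
    using mem_Xn_Zn_eq_zero_if_inj[where A = A, OF assms(1,2) lin inj]
      zero_in_Xn_Zn[where A = A, OF assms(1,2) lin]
    by blast
qed

end
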